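(* Let $k\ge 2$ and let $\alpha_1,\dots,\alpha_k$ be nonnegative rational numbers such that the sum of any $k-1$ of them is at most $1$ and $\alpha_1+\cdots+\alpha_k>1$. For every integer $g\ge 0$, the number $f(g)$ of $\alpha$-communal $k$-tuples whose entries sum to $g$ equals \[ f(g)=\binom{\sum_{i=1}^k \lfloor \alpha_i g\rfloor - g + k-1}{k-1}, \] where, as usual, $\binom{n}{r}=0$ for integers $0\le n<r$.
   Context: A $k$-tuple $[g_1,\dots,g_k]$ of integers is called $\alpha$-communal (for $\alpha=(\alpha_1,\dots,\alpha_k)$) if $0\le g_i\le \alpha_i\sum_{j=1}^k g_j$ for every $i$. For an integer $g\ge 0$, $f(g)$ denotes the number of $\alpha$-communal $k$-tuples $[g_1,\dots,g_k]$ with $\sum_i g_i=g$. *)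

theory Defs
  imports Complex_Main "HOL-Library.FuncSet"
begin

text \<open>A k-tuple of integers is represented as a function g :: nat \<Rightarrow> int on the index
set {0..<k} (extensional: equal to undefined outside). The weights alpha are
indexed by {0..<k} as well.\<close>

definition communal :: "nat \<Rightarrow> (nat \<Rightarrow> rat) \<Rightarrow> (nat \<Rightarrow> int) \<Rightarrow> bool" where
  "communal k \<alpha> x \<longleftrightarrow>
     (\<forall>i<k. 0 \<le> x i \<and> of_int (x i) \<le> \<alpha> i * of_int (\<Sum>j<k. x j))"

definition communal_count :: "nat \<Rightarrow> (nat \<Rightarrow> rat) \<Rightarrow> int \<Rightarrow> nat" where
  "communal_count k \<alpha> g =
     card {x \<in> extensional {..<k}. communal k \<alpha> x \<and> (\<Sum>i<k. x i) = g}"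

end

theory Submission
  imports Defs
begin

(* For a tuple x with sum g, being alpha-communal just says
   0 <= x_i <= a_i with a_i = floor (alpha_i * g).  So f(g) counts the integer
   points of the box [0, a_1] x ... x [0, a_k] on the hyperplane sum x_i = g.
   Put N = sum a_i - g.  The hypothesis that any k-1 of the alpha_i sum to at
   most 1 gives sum_{j /= i} a_j <= g, i.e. N <= a_i for every i.  Under this
   "slack fits in every box" condition the upper bounds never bind: the map
   x |-> (a_i - x_i)_i is a bijection onto the k-tuples of naturals with sum N,
   which stars and bars counts as (N + k - 1 choose k - 1).  If N < 0 there
   are no such tuples at all, and the binomial coefficient vanishes as well.  The argument
   uses only k >= 2, g >= 0 and the bound on sums of k-1 weights. *)

definition box_tuples :: "nat \<Rightarrow> (nat \<Rightarrow> int) \<Rightarrow> int \<Rightarrow> (nat \<Rightarrow> int) set" where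
  "box_tuples k a g =
     {x \<in> extensional {..<k}. (\<forall>i<k. 0 \<le> x i \<and> x i \<le> a i) \<and> (\<Sum>i<k. x i) = g}"

lemma communal_iff_box:
  assumes "(\<Sum>i<k. x i) = g"
  shows "communal k \<alpha> x \<longleftrightarrow> (\<forall>i<k. 0 \<le> x i \<and> x i \<le> \<lfloor>\<alpha> i * of_int g\<rfloor>)"
  using assms unfolding communal_def by (simp add: le_floor_iff)

lemma communal_count_eq_card_box:
  "communal_count k \<alpha> g = card (box_tuples k (\<lambda>i. \<lfloor>\<alpha> i * of_int g\<rfloor>) g)"
proof -
  have "{x \<in> extensional {..<k}. communal k \<alpha> x \<and> (\<Sum>i<k. x i) = g}
        = box_tuples k (\<lambda>i. \<lfloor>\<alpha> i * of_int g\<rfloor>) g"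
    unfolding box_tuples_def using communal_iff_box by blast
  then show ?thesis unfolding communal_count_def by simp
qed

text \<open>This is the only
  place where the hypothesis on sums of k-1 weights enters.\<close>

lemma sum_floor_remove_le:
  fixes \<alpha> :: "nat \<Rightarrow> 'a::floor_ceiling" and g :: int
  assumes "(\<Sum>j\<in>{..<k} - {i}. \<alpha> j) \<le> 1" and "0 \<le> g"
  shows "(\<Sum>j\<in>{..<k} - {i}. \<lfloor>\<alpha> j * of_int g\<rfloor>) \<le> g"
proof -
  have "of_int (\<Sum>j\<in>{..<k} - {i}. \<lfloor>\<alpha> j * of_int g\<rfloor>)
          \<le> (\<Sum>j\<in>{..<k} - {i}. \<alpha> j * of_int g)"
    unfolding of_int_sum by (rule sum_mono) simp
  also have "\<dots> = (\<Sum>j\<in>{..<k} - {i}. \<alpha> j) * of_int g"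
    by (simp add: sum_distrib_right)
  also have "\<dots> \<le> 1 * of_int g"
    using assms by (intro mult_right_mono) auto
  finally show ?thesis by (simp only: mult_1 of_int_le_iff)
qed

lemma slack_le_bound:
  fixes a :: "nat \<Rightarrow> int"
  assumes "i < k" and "(\<Sum>j\<in>{..<k} - {i}. a j) \<le> g"
  shows "(\<Sum>j<k. a j) - g \<le> a i"
  using assms by (simp add: sum.remove)

lemma box_tuples_empty:
  assumes "(\<Sum>i<k. a i) < g"
  shows "box_tuples k a g = {}"
proof -
  have "(\<Sum>i<k. x i) \<le> (\<Sum>i<k. a i)" if "x \<in> box_tuples k a g" for x
    using that unfolding box_tuples_def by (intro sum_mono) auto
  then show ?thesis using assms unfolding box_tuples_def by fastforce
qed

text \<open>When the slack N = sum a - g is nonnegative and fits into every box, the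
  complement map x \<mapsto> (a i - x i) is a bijection from the box tuples onto the
  lists of k naturals with sum N: the upper bounds a i never cut anything off.\<close>

lemma bij_betw_box_complement:
  fixes a :: "nat \<Rightarrow> int" and g :: int and k :: nat
  defines "N \<equiv> (\<Sum>i<k. a i) - g"
  assumes N_nonneg: "0 \<le> N" and N_le: "\<And>i. i < k \<Longrightarrow> N \<le> a i"
  shows "bij_betw (\<lambda>x. map (\<lambda>i. nat (a i - x i)) [0..<k]) (box_tuples k a g)
           {l. length l = k \<and> sum_list l = nat N}"
proof (rule bij_betw_byWitness[where f' = "\<lambda>l. restrict (\<lambda>i. a i - int (l!i)) {..<k}"])
  have sum_upt: "sum_list (map f [0..<k]) = (\<Sum>i<k. f i)" for f :: "nat \<Rightarrow> nat"
    by (simp add: sum_list_sum_nth atLeast0LessThan)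
  show "\<forall>x\<in>box_tuples k a g.
          restrict (\<lambda>i. a i - int (map (\<lambda>i. nat (a i - x i)) [0..<k] ! i)) {..<k} = x"
    unfolding box_tuples_def by (auto simp: restrict_def extensional_def)
  show "\<forall>l\<in>{l. length l = k \<and> sum_list l = nat N}.
          map (\<lambda>i. nat (a i - restrict (\<lambda>i. a i - int (l!i)) {..<k} i)) [0..<k] = l"
    by (auto intro: nth_equalityI)
  show "(\<lambda>x. map (\<lambda>i. nat (a i - x i)) [0..<k]) ` box_tuples k a g
          \<subseteq> {l. length l = k \<and> sum_list l = nat N}"
  proof clarsimp
    fix x assume x: "x \<in> box_tuples k a g"
    have "(\<Sum>i<k. int (nat (a i - x i))) = (\<Sum>i<k. a i - x i)"
      using x unfolding box_tuples_def by (intro sum.cong) auto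
    also have "\<dots> = N"
      using x unfolding box_tuples_def N_def by (simp add: sum_subtractf)
    finally show "sum_list (map (\<lambda>i. nat (a i - x i)) [0..<k]) = nat N"
      unfolding sum_upt by (metis nat_int of_nat_sum)
  qed
  show "(\<lambda>l. restrict (\<lambda>i. a i - int (l!i)) {..<k}) ` {l. length l = k \<and> sum_list l = nat N}
          \<subseteq> box_tuples k a g"
  proof (rule image_subsetI)
    fix l :: "nat list" assume "l \<in> {l. length l = k \<and> sum_list l = nat N}"
    then have len: "length l = k" and sum_l: "sum_list l = nat N" by simp_all
    have entry_le: "int (l!i) \<le> N" if "i < k" for i
      using elem_le_sum_list[of i l] len sum_l N_nonneg that by simp
    have "(\<Sum>i<k. a i - int (l!i)) = (\<Sum>i<k. a i) - int (sum_list l)"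
      using len by (simp add: sum_subtractf sum_list_sum_nth atLeast0LessThan)
    then have "(\<Sum>i<k. a i - int (l!i)) = g"
      using sum_l N_nonneg unfolding N_def by simp
    then show "restrict (\<lambda>i. a i - int (l!i)) {..<k} \<in> box_tuples k a g"
      using entry_le N_le unfolding box_tuples_def by force
  qed
qed

lemma card_box_tuples:
  fixes a :: "nat \<Rightarrow> int" and g :: int and k :: nat
  defines "N \<equiv> (\<Sum>i<k. a i) - g"
  assumes "1 \<le> k" and "0 \<le> N" and "\<And>i. i < k \<Longrightarrow> N \<le> a i"
  shows "card (box_tuples k a g) = (nat N + k - 1) choose (k - 1)"
proof -
  have "card (box_tuples k a g) = card {l. length l = k \<and> sum_list l = nat N}"
    using bij_betw_box_complement assms by (auto intro: bij_betw_same_card)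
  also have "\<dots> = (nat N + k - 1) choose nat N"
    by (rule card_length_sum_list)
  also have "\<dots> = (nat N + k - 1) choose (k - 1)"
    using assms(2) by (subst binomial_symmetric) auto
  finally show ?thesis .
qed

theorem mainTheorem1:
  fixes k :: nat and \<alpha> :: "nat \<Rightarrow> rat" and g :: int
  assumes "k \<ge> 2"
    and "\<forall>i<k. 0 \<le> \<alpha> i"
    and "\<forall>j<k. (\<Sum>i\<in>{..<k} - {j}. \<alpha> i) \<le> 1"
    and "(\<Sum>i<k. \<alpha> i) > 1"
    and "g \<ge> 0"
  shows "communal_count k \<alpha> g =
           nat ((\<Sum>i<k. \<lfloor>\<alpha> i * of_int g\<rfloor>) - g + int k - 1) choose (k - 1)"
proof -
  define a where "a i = \<lfloor>\<alpha> i * of_int g\<rfloor>" for i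
  define N where "N = (\<Sum>i<k. a i) - g"
  have slack: "N \<le> a i" if "i < k" for i
    unfolding N_def a_def
    using that assms(3,5) by (intro slack_le_bound sum_floor_remove_le) auto
  have count: "communal_count k \<alpha> g = card (box_tuples k a g)"
    unfolding a_def by (rule communal_count_eq_card_box)
  show ?thesis
  proof (cases "0 \<le> N")
    case True
    then have "card (box_tuples k a g) = (nat N + k - 1) choose (k - 1)"
      using assms(1) slack unfolding N_def by (intro card_box_tuples) auto
    moreover have "nat N + k - 1 = nat ((\<Sum>i<k. a i) - g + int k - 1)"
      using True assms(1) unfolding N_def by linarith
    ultimately show ?thesis using count unfolding a_def by simp
  next
    case False
    then have "box_tuples k a g = {}"
      unfolding N_def by (intro box_tuples_empty) simp
    moreover have "nat ((\<Sum>i<k. a i) - g + int k - 1) < k - 1"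
      using False assms(1) unfolding N_def by linarith
    ultimately show ?thesis using count unfolding a_def by simp
  qed
qed

end
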